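(* Let $q=p^{m_0}$ with $p$ prime, let $A=\mathbb{F}_q[\theta]$, and let $m$ be a positive integer. Then $$\Pi\left(\frac{q^{m+1}-1}{q-1}\right)=\det V(0,[1],\ldots,[m]),$$ where $V(0,[1],\ldots,[m])$ is the $(m+1)\times(m+1)$ matrix whose row indexed by $i\in\{0,1,\ldots,m\}$ is $(1,[i],[i]^2,\ldots,[i]^m)$, with the convention $[0]:=0$ and $0^0=1$ (so the first row is $(1,0,\ldots,0)$).
   Context: For a positive integer $i$, $[i]:=\theta^{q^i}-\theta\in A$. Set $D_0:=1$ and, for $i>0$, $D_i:=[i][i-1]^q\cdots[1]^{q^{i-1}}$ (equivalently $D_i=[i]D_{i-1}^q$). For a nonnegative integer $j$ with $q$-adic expansion $j=\sum_{t=0}^{n}c_tq^t$, $0\le c_t<q$, the Carlitz factorial is $\Pi(j):=\prod_{t=0}^{n}D_t^{c_t}$. In particular $\Pi\left(\frac{q^{m+1}-1}{q-1}\right)=D_0D_1\cdots D_m$. *)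

theory Defs
  imports "HOL-Computational_Algebra.Polynomial" "Jordan_Normal_Form.Determinant"
begin

text \<open>Here A = F_q[theta] is rendered as the polynomial ring over a finite field
  of type 'a, q = card (UNIV :: 'a set), theta = monom 1 1.\<close>

definition theta :: "'a::{finite,field} poly" where
  "theta = monom 1 1"

text \<open>[i] = theta^(q^i) - theta; note [0] = 0 automatically.\<close>
definition brk :: "nat \<Rightarrow> 'a::{finite,field} poly" where
  "brk i = theta ^ (card (UNIV :: 'a set) ^ i) - theta"

fun Dcar :: "nat \<Rightarrow> 'a::{finite,field} poly" where
  "Dcar 0 = 1"
| "Dcar (Suc i) = brk (Suc i) * (Dcar i) ^ card (UNIV :: 'a set)"

text \<open>Carlitz factorial: product over q-adic digits c_t = (j div q^t) mod q.
  Digits with t > j vanish, so the range {..j} covers all digits.\<close>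
definition carlitz_fact :: "nat \<Rightarrow> 'a::{finite,field} poly" where
  "carlitz_fact j = (\<Prod>t\<in>{..j}. Dcar t ^ ((j div card (UNIV :: 'a set) ^ t) mod card (UNIV :: 'a set)))"

end

theory Submission
  imports Defs "HOL-Number_Theory.Residues"
begin

text \<open>Both sides equal \<open>D\<^sub>0 D\<^sub>1 \<cdots> D\<^sub>m\<close>. The \<open>q\<close>-adic digits of \<open>(q\<^sup>m\<^sup>+\<^sup>1 - 1)/(q - 1) = 1 + q + \<cdots> + q\<^sup>m\<close>
  are all \<open>1\<close>, so the Carlitz factorial is that product. The Vandermonde determinant is
  \<open>\<Prod>\<^sub>j \<Prod>\<^sub>i\<^sub><\<^sub>j ([j] - [i])\<close>, and since \<open>[j+1] - [i+1] = ([j] - [i])\<^sup>q\<close> by the Frobenius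
  and \<open>[j+1] - [0] = [j+1]\<close>, the inner product satisfies the recursion \<open>D\<^sub>j\<^sub>+\<^sub>1 = [j+1] D\<^sub>j\<^sup>q\<close>.\<close>

text \<open>Right multiplication by the unitriangular matrix subtracts \<open>x 0\<close> times column \<open>j - 1\<close>
  from column \<open>j\<close>, which clears the first row of the Vandermonde matrix except for its leading \<open>1\<close>.\<close>

lemma vandermonde_mult_shift_mat:
  fixes x :: "nat \<Rightarrow> 'a::comm_ring_1"
  shows "mat n n (\<lambda>(i, j). x i ^ j) *
      mat n n (\<lambda>(k, j). (if k = j then 1 else 0) - (if j = Suc k then x 0 else 0))
    = mat n n (\<lambda>(i, j). if j = 0 then 1 else (x i - x 0) * x i ^ (j - 1))"
    (is "?V * ?E = ?W")
proof (rule eq_matI)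
  fix i j assume "i < dim_row ?W" and "j < dim_col ?W"
  hence i: "i < n" and j: "j < n" by auto
  have "(\<Sum>k<n. x i ^ k * ((if k = j then 1 else 0) - (if j = Suc k then x 0 else 0)))
      = (\<Sum>k<n. if k = j then x i ^ k else 0) - (\<Sum>k<n. if Suc k = j then x 0 * x i ^ k else 0)"
    unfolding sum_subtractf[symmetric] by (rule sum.cong) auto
  also have "\<dots> = (if j = 0 then 1 else (x i - x 0) * x i ^ (j - 1))"
    using j by (cases j) (auto simp: algebra_simps)
  finally show "(?V * ?E) $$ (i, j) = ?W $$ (i, j)"
    using i j by (simp add: scalar_prod_def atLeast0LessThan)
qed auto

lemma det_shift_mat:
  fixes c :: "'a::comm_ring_1"
  shows "det (mat n n (\<lambda>(k, j). (if k = j then 1 else 0) - (if j = Suc k then c else 0))) = 1"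
  by (subst det_upper_triangular) (auto simp: upper_triangular_def prod_list_diag_prod)

lemma det_vandermonde:
  fixes x :: "nat \<Rightarrow> 'a::comm_ring_1"
  shows "det (mat n n (\<lambda>(i, j). x i ^ j)) = (\<Prod>j<n. \<Prod>i<j. x j - x i)"
proof (induction n arbitrary: x)
  case 0
  show ?case by simp
next
  case (Suc n)
  let ?V = "mat (Suc n) (Suc n) (\<lambda>(i, j). x i ^ j)"
  let ?E = "mat (Suc n) (Suc n) (\<lambda>(k, j). (if k = j then 1 else 0) - (if j = Suc k then x 0 else 0))"
  let ?W = "mat (Suc n) (Suc n) (\<lambda>(i, j). if j = 0 then 1 else (x i - x 0) * x i ^ (j - 1))"
  have "det ?V = det ?W"
    using det_mult[of ?V "Suc n" ?E] by (simp add: vandermonde_mult_shift_mat det_shift_mat)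
  also have "\<dots> = (\<Sum>j<Suc n. ?W $$ (0, j) * cofactor ?W 0 j)"
    by (rule laplace_expansion_row) auto
  also have "\<dots> = (\<Sum>j<Suc n. if j = 0 then det (mat_delete ?W 0 0) else 0)"
    by (rule sum.cong) (auto simp: cofactor_def)
  also have "\<dots> = det (mat_delete ?W 0 0)"
    by simp
  also have "mat_delete ?W 0 0 = mat\<^sub>r n n (\<lambda>i. (x (Suc i) - x 0) \<cdot>\<^sub>v vec n (\<lambda>j. x (Suc i) ^ j))"
    by (rule eq_matI) (auto simp: mat_delete_def)
  also have "det \<dots> = (\<Prod>i\<in>{0..<n}. x (Suc i) - x 0) * det (mat n n (\<lambda>(i, j). (x \<circ> Suc) i ^ j))"
    by (subst det_rows_mul) (auto intro!: arg_cong2[where f = "(*)"] arg_cong[where f = det] eq_matI)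
  also have "\<dots> = (\<Prod>j<n. \<Prod>i<Suc j. x (Suc j) - x i)"
    by (simp only: Suc.IH atLeast0LessThan prod.lessThan_Suc_shift prod.distrib o_apply)
  also have "\<dots> = (\<Prod>j<Suc n. \<Prod>i<j. x j - x i)"
    by (simp only: prod.lessThan_Suc_shift lessThan_0 prod.empty mult_1)
  finally show ?case .
qed

lemma CHAR_eq_prime_of_card:
  assumes "prime p" and "m0 > 0" and "card (UNIV :: 'a::{finite,field} set) = p ^ m0"
  shows "CHAR('a) = p"
proof -
  have "prime CHAR('a)"
    by (rule prime_CHAR_semidom) (simp add: finite_imp_CHAR_pos)
  moreover have "CHAR('a) dvd p ^ m0"
    using CHAR_dvd_CARD[where 'a = 'a] assms(3) by simp
  ultimately show ?thesis
    using assms(1) prime_dvd_power primes_dvd_imp_eq by blast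
qed

lemma freshmans_dream_diff':
  fixes a b :: "'a::comm_ring_1"
  assumes "prime CHAR('a)" and "m = CHAR('a) ^ n"
  shows "(a - b) ^ m = a ^ m - b ^ m"
  using freshmans_dream'[OF assms, of "a - b" b] by (simp add: algebra_simps)

lemma brk_Suc_diff:
  assumes "prime p" and "m0 > 0" and "card (UNIV :: 'a::{finite,field} set) = p ^ m0"
  shows "(brk (Suc j) :: 'a poly) - brk (Suc i) = (brk j - brk i) ^ card (UNIV :: 'a set)"
proof -
  let ?q = "card (UNIV :: 'a set)"
  have "prime CHAR('a poly)" and "?q = CHAR('a poly) ^ m0"
    using CHAR_eq_prime_of_card[OF assms] assms by simp_all
  hence "(theta ^ ?q ^ j - theta ^ ?q ^ i :: 'a poly) ^ ?q = (theta ^ ?q ^ j) ^ ?q - (theta ^ ?q ^ i) ^ ?q"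
    by (rule freshmans_dream_diff')
  thus ?thesis
    by (simp add: brk_def flip: power_mult) (simp add: mult.commute)
qed

lemma Dcar_eq_prod_brk_diff:
  assumes "prime p" and "m0 > 0" and "card (UNIV :: 'a::{finite,field} set) = p ^ m0"
  shows "(Dcar j :: 'a poly) = (\<Prod>i<j. brk j - brk i)"
proof (induction j)
  case 0
  show ?case by simp
next
  case (Suc j)
  have "(\<Prod>i<Suc j. brk (Suc j) - brk i :: 'a poly)
      = (brk (Suc j) - brk 0) * (\<Prod>i<j. (brk j - brk i) ^ card (UNIV :: 'a set))"
    by (simp only: prod.lessThan_Suc_shift brk_Suc_diff[OF assms])
  also have "\<dots> = Dcar (Suc j)"
    by (simp add: brk_def Suc.IH prod_power_distrib)
  finally show ?case ..
qed

definition repunit :: "nat \<Rightarrow> nat \<Rightarrow> nat" where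
  "repunit q n = (\<Sum>s<n. q ^ s)"

lemma repunit_geometric: "q \<ge> 1 \<Longrightarrow> (q - 1) * repunit q n = q ^ n - 1"
proof (induction n)
  case 0
  show ?case by (simp add: repunit_def)
next
  case (Suc n)
  have "(q - 1) * repunit q (Suc n) = q ^ n - 1 + (q - 1) * q ^ n"
    using Suc by (simp add: repunit_def algebra_simps)
  also have "\<dots> = q ^ Suc n - 1"
    using Suc.prems by (simp add: algebra_simps diff_mult_distrib)
  finally show ?case .
qed

lemma repunit_eq_div:
  assumes "q \<ge> 2"
  shows "repunit q n = (q ^ n - 1) div (q - 1)"
proof -
  have "q ^ n - 1 = (q - 1) * repunit q n"
    using assms repunit_geometric[of q n] by simp
  thus ?thesis
    using assms by simp
qed

lemma repunit_add: "repunit q (a + b) = repunit q a + q ^ a * repunit q b"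
  by (induction b) (simp_all add: repunit_def algebra_simps power_add)

lemma repunit_less_power:
  assumes "q \<ge> 2"
  shows "repunit q n < q ^ n"
proof -
  have "1 \<le> q - 1"
    using assms by simp
  hence "repunit q n \<le> (q - 1) * repunit q n"
    using mult_le_mono1 by fastforce
  also have "\<dots> < q ^ n"
    using assms repunit_geometric[of q n] by simp
  finally show ?thesis .
qed

lemma repunit_ge:
  assumes "q \<ge> 1"
  shows "n \<le> repunit q n"
proof (induction n)
  case (Suc n)
  thus ?case
    using one_le_power[OF assms, of n] by (simp add: repunit_def)
qed (simp add: repunit_def)

lemma repunit_digit:
  assumes "q \<ge> 2"
  shows "(repunit q (Suc m) div q ^ t) mod q = (if t \<le> m then 1 else 0)"
proof (cases "t \<le> m")
  case True
  have "repunit q (Suc m) div q ^ t = (repunit q t + q ^ t * (1 + q * repunit q (m - t))) div q ^ t"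
    using repunit_add[of q t "Suc (m - t)"] repunit_add[of q 1 "m - t"] True
    by (simp add: Suc_diff_le repunit_def)
  also have "\<dots> = (1 + q * repunit q (m - t)) + repunit q t div q ^ t"
    using assms by (intro div_mult_self2) simp
  also have "\<dots> = 1 + q * repunit q (m - t)"
    using repunit_less_power[OF assms, of t] by simp
  finally show ?thesis
    using True assms by (simp add: mod_Suc)
next
  case False
  have "repunit q (Suc m) < q ^ Suc m"
    by (rule repunit_less_power[OF assms])
  also have "\<dots> \<le> q ^ t"
    using False assms by (intro power_increasing) auto
  finally show ?thesis
    using False by simp
qed

lemma carlitz_fact_repunit:
  assumes "card (UNIV :: 'a::{finite,field} set) \<ge> 2"
  shows "(carlitz_fact (repunit (card (UNIV :: 'a set)) (Suc m)) :: 'a poly) = (\<Prod>t\<le>m. Dcar t)"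
proof -
  let ?J = "repunit (card (UNIV :: 'a set)) (Suc m)"
  have "(carlitz_fact ?J :: 'a poly) = (\<Prod>t\<le>?J. Dcar t ^ (if t \<le> m then 1 else 0))"
    unfolding carlitz_fact_def using repunit_digit[OF assms] by simp
  also have "\<dots> = (\<Prod>t\<le>m. Dcar t)"
    using repunit_ge[of "card (UNIV :: 'a set)" "Suc m"] assms
    by (intro prod.mono_neutral_cong_right) auto
  finally show ?thesis .
qed

theorem corollary2p7:
  fixes p m0 m :: nat
  assumes "prime p" and "m0 > 0" and "card (UNIV :: ('a::{finite,field}) set) = p ^ m0" and "m > 0"
  shows "(carlitz_fact ((card (UNIV :: 'a set) ^ (m + 1) - 1) div (card (UNIV :: 'a set) - 1)) :: 'a poly)
         = det (mat (m + 1) (m + 1) (\<lambda>(i, j). (brk i :: 'a poly) ^ j))"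
proof -
  let ?q = "card (UNIV :: 'a set)"
  have "p \<ge> 2"
    using assms(1) by (rule prime_ge_2_nat)
  hence q: "?q \<ge> 2"
    using assms(2,3) self_le_power[of p m0] by simp
  have "carlitz_fact ((?q ^ (m + 1) - 1) div (?q - 1)) = (\<Prod>t\<le>m. Dcar t :: 'a poly)"
    using carlitz_fact_repunit[OF q, of m] repunit_eq_div[OF q, of "Suc m"] by simp
  also have "\<dots> = (\<Prod>j<m + 1. \<Prod>i<j. brk j - brk i)"
    using Dcar_eq_prod_brk_diff[OF assms(1-3)] by (simp add: lessThan_Suc_atMost)
  also have "\<dots> = det (mat (m + 1) (m + 1) (\<lambda>(i, j). brk i ^ j))"
    by (rule det_vandermonde[symmetric])
  finally show ?thesis .
qed

end
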